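(* Let $m$ be an even positive integer, let $q,k$ be positive integers, and put $n=q(k-1)+1$. Let ${\bf h}=(h_0,h_1,\dots,h_{qm(k-1)})^\top\in\mathbb{R}^{qm(k-1)+1}$ (note $qm(k-1)+1=m(n-1)+1$). Let $\mathcal{H}_m$ be the $m^{\rm th}$-order $n$-dimensional Hankel tensor with entries $(\mathcal{H}_m)_{i_1\dots i_m}=h_{i_1+\dots+i_m}$ ($0\le i_j\le n-1$), and let $\mathcal{H}_{qm}$ be the $(qm)^{\rm th}$-order $k$-dimensional Hankel tensor with entries $(\mathcal{H}_{qm})_{i_1\dots i_{qm}}=h_{i_1+\dots+i_{qm}}$ ($0\le i_j\le k-1$). Then: (i) if $\mathcal{H}_m$ is positive semi-definite (resp. positive definite, negative semi-definite, negative definite), then $\mathcal{H}_{qm}$ is positive semi-definite (resp. positive definite, negative semi-definite, negative definite); (ii) if $\mathcal{H}_m$ is an SOS tensor, then $\mathcal{H}_{qm}$ is an SOS tensor, and the SOS rank of $\mathcal{H}_{qm}$ is no larger than the SOS rank of $\mathcal{H}_m$.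
   Context: For a real $m^{\rm th}$-order $n$-dimensional tensor $\mathcal{T}$ with $m$ even, $\mathcal{T}{\bf x}^m=\sum_{i_1,\dots,i_m}\mathcal{T}_{i_1\dots i_m}x_{i_1}\cdots x_{i_m}$. $\mathcal{T}$ is positive semi-definite (positive definite, negative semi-definite, negative definite) if $\mathcal{T}{\bf x}^m\ge 0$ ($>0$, $\le 0$, $<0$) for all nonzero ${\bf x}\in\mathbb{R}^n$. $\mathcal{T}$ is an SOS tensor if the polynomial $\mathcal{T}{\bf x}^m$ is a sum of squares of real polynomials; its SOS rank is the minimum number of squares in such a representation. *)

theory Defs
  imports Complex_Main
begin

text \<open>Real m-th order n-dimensional tensors are functions from index lists
  (of length m, entries in {0..n-1}) to reals. Vectors in R^n are functions
  nat => real, only the coordinates 0..n-1 matter.\<close>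

definition index_tuples :: "nat \<Rightarrow> nat \<Rightarrow> nat list set" where
  "index_tuples m n = {is. length is = m \<and> set is \<subseteq> {..<n}}"

definition tensor_form :: "nat \<Rightarrow> nat \<Rightarrow> (nat list \<Rightarrow> real) \<Rightarrow> (nat \<Rightarrow> real) \<Rightarrow> real" where
  "tensor_form m n T x = (\<Sum>is\<in>index_tuples m n. T is * (\<Prod>j<m. x (is ! j)))"

definition nonzero_vec :: "nat \<Rightarrow> (nat \<Rightarrow> real) \<Rightarrow> bool" where
  "nonzero_vec n x \<longleftrightarrow> (\<exists>i<n. x i \<noteq> 0)"

definition psd_tensor :: "nat \<Rightarrow> nat \<Rightarrow> (nat list \<Rightarrow> real) \<Rightarrow> bool" where
  "psd_tensor m n T \<longleftrightarrow> (\<forall>x. nonzero_vec n x \<longrightarrow> tensor_form m n T x \<ge> 0)"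

definition pd_tensor :: "nat \<Rightarrow> nat \<Rightarrow> (nat list \<Rightarrow> real) \<Rightarrow> bool" where
  "pd_tensor m n T \<longleftrightarrow> (\<forall>x. nonzero_vec n x \<longrightarrow> tensor_form m n T x > 0)"

definition nsd_tensor :: "nat \<Rightarrow> nat \<Rightarrow> (nat list \<Rightarrow> real) \<Rightarrow> bool" where
  "nsd_tensor m n T \<longleftrightarrow> (\<forall>x. nonzero_vec n x \<longrightarrow> tensor_form m n T x \<le> 0)"

definition nd_tensor :: "nat \<Rightarrow> nat \<Rightarrow> (nat list \<Rightarrow> real) \<Rightarrow> bool" where
  "nd_tensor m n T \<longleftrightarrow> (\<forall>x. nonzero_vec n x \<longrightarrow> tensor_form m n T x < 0)"

inductive_set poly_fun :: "nat \<Rightarrow> ((nat \<Rightarrow> real) \<Rightarrow> real) set" for n :: nat where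
  pf_const: "(\<lambda>x. c) \<in> poly_fun n"
| pf_var: "i < n \<Longrightarrow> (\<lambda>x. x i) \<in> poly_fun n"
| pf_add: "p \<in> poly_fun n \<Longrightarrow> q \<in> poly_fun n \<Longrightarrow> (\<lambda>x. p x + q x) \<in> poly_fun n"
| pf_mult: "p \<in> poly_fun n \<Longrightarrow> q \<in> poly_fun n \<Longrightarrow> (\<lambda>x. p x * q x) \<in> poly_fun n"

definition sos_rep :: "nat \<Rightarrow> nat \<Rightarrow> (nat list \<Rightarrow> real) \<Rightarrow> nat \<Rightarrow> bool" where
  "sos_rep m n T r \<longleftrightarrow> (\<exists>p. (\<forall>j<r. p j \<in> poly_fun n) \<and>
      (\<forall>x. tensor_form m n T x = (\<Sum>j<r. (p j x)^2)))"

definition sos_tensor :: "nat \<Rightarrow> nat \<Rightarrow> (nat list \<Rightarrow> real) \<Rightarrow> bool" where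
  "sos_tensor m n T \<longleftrightarrow> (\<exists>r. sos_rep m n T r)"

definition sos_rank :: "nat \<Rightarrow> nat \<Rightarrow> (nat list \<Rightarrow> real) \<Rightarrow> nat" where
  "sos_rank m n T = (LEAST r. sos_rep m n T r)"

definition hankel :: "(nat \<Rightarrow> real) \<Rightarrow> nat list \<Rightarrow> real" where
  "hankel h is = h (sum_list is)"

end

theory Submission
  imports Defs "HOL-Computational_Algebra.Polynomial"
begin

text \<open>Identify a vector \<open>x\<close> of length \<open>k\<close> with the polynomial \<open>p(t) = \<Sum>i<k. x i * t ^ i\<close>
  and let \<open>L\<close> be the linear functional on polynomials sending \<open>t ^ s\<close> to \<open>h s\<close>. Expanding
  the product shows that every Hankel form equals \<open>L (p ^ m)\<close>. Hence the form of order \<open>q * m\<close>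
  at \<open>x\<close> is \<open>L ((p ^ q) ^ m)\<close>, the form of order \<open>m\<close> at the coefficient vector \<open>y\<close> of \<open>p ^ q\<close>,
  which lives in dimension \<open>n\<close> because \<open>deg (p ^ q) \<le> q * (k - 1) < n\<close>. The map \<open>x \<mapsto> y\<close>
  is polynomial and sends nonzero vectors to nonzero vectors, so definiteness and
  sum-of-squares representations (with the same number of squares) pull back along it.\<close>

lemma index_tuples_0: "index_tuples 0 n = {[]}"
  by (auto simp: index_tuples_def)

lemma index_tuples_Suc:
  "index_tuples (Suc m) n = (\<lambda>(i, is). i # is) ` ({..<n} \<times> index_tuples m n)"
  by (auto simp: index_tuples_def length_Suc_conv image_iff)

lemma sum_index_tuples_Suc:
  "(\<Sum>is\<in>index_tuples (Suc m) n. F is) = (\<Sum>i<n. \<Sum>is\<in>index_tuples m n. F (i # is))"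
proof -
  have "inj_on (\<lambda>(i, is). i # is) ({..<n} \<times> index_tuples m n)"
    by (auto simp: inj_on_def)
  then have "(\<Sum>is\<in>index_tuples (Suc m) n. F is)
      = (\<Sum>(i, is)\<in>{..<n} \<times> index_tuples m n. F (i # is))"
    unfolding index_tuples_Suc by (subst sum.reindex) (simp_all add: split_def)
  then show ?thesis
    by (simp add: sum.cartesian_product split_def)
qed

lemma prod_nth_eq_prod_list: "(\<Prod>j<length xs. x (xs ! j)) = prod_list (map x xs)"
  by (induction xs) (simp_all add: prod.lessThan_Suc_shift del: prod.lessThan_Suc)

lemma tensor_form_prod_list:
  "tensor_form m n T x = (\<Sum>is\<in>index_tuples m n. T is * prod_list (map x is))"
  unfolding tensor_form_def
  by (rule sum.cong) (auto simp: index_tuples_def prod_nth_eq_prod_list[symmetric])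

definition hankel_functional :: "(nat \<Rightarrow> 'a::comm_semiring_1) \<Rightarrow> 'a poly \<Rightarrow> 'a" where
  "hankel_functional h p = (\<Sum>s\<le>degree p. h s * coeff p s)"

lemma hankel_functional_eq_sum:
  "degree p < N \<Longrightarrow> hankel_functional h p = (\<Sum>s<N. h s * coeff p s)"
  unfolding hankel_functional_def
  by (rule sum.mono_neutral_left) (auto simp: coeff_eq_0)

lemma hankel_functional_0 [simp]: "hankel_functional h 0 = 0"
  by (simp add: hankel_functional_def)

lemma hankel_functional_add:
  "hankel_functional h (p + q) = hankel_functional h p + hankel_functional h q"
proof -
  define N where "N = Suc (degree p + degree q)"
  have "degree p < N" "degree q < N" "degree (p + q) < N"
    using degree_add_le_max[of p q] by (auto simp: N_def)
  then show ?thesis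
    by (simp add: hankel_functional_eq_sum distrib_left sum.distrib)
qed

lemma hankel_functional_smult:
  "hankel_functional h (smult c p) = c * hankel_functional h p"
proof -
  have "degree (smult c p) < Suc (degree p)"
    using degree_smult_le[of c p] by simp
  then have "hankel_functional h (smult c p) = (\<Sum>s<Suc (degree p). h s * coeff (smult c p) s)"
    by (rule hankel_functional_eq_sum)
  then show ?thesis
    by (simp add: hankel_functional_def lessThan_Suc_atMost sum_distrib_left algebra_simps)
qed

lemma hankel_functional_sum:
  "hankel_functional h (\<Sum>i\<in>A. p i) = (\<Sum>i\<in>A. hankel_functional h (p i))"
  by (induction A rule: infinite_finite_induct) (simp_all add: hankel_functional_add)

lemma hankel_functional_pCons:
  "hankel_functional h (pCons c p) = h 0 * c + hankel_functional (\<lambda>s. h (Suc s)) p"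
proof -
  have "degree (pCons c p) < Suc (Suc (degree p))"
    using degree_pCons_le[of c p] by simp
  then have "hankel_functional h (pCons c p) = h 0 * c + (\<Sum>s<Suc (degree p). h (Suc s) * coeff p s)"
    by (simp add: hankel_functional_eq_sum sum.lessThan_Suc_shift del: sum.lessThan_Suc)
  then show ?thesis
    by (simp add: hankel_functional_def lessThan_Suc_atMost)
qed

lemma hankel_functional_monom_mult:
  "hankel_functional h (monom 1 i * p) = hankel_functional (\<lambda>s. h (i + s)) p"
proof (induction i arbitrary: h)
  case (Suc i)
  have "monom 1 (Suc i) * p = pCons 0 (monom 1 i * p)"
    by (simp add: monom_Suc)
  with Suc show ?case
    by (simp add: hankel_functional_pCons)
qed simp

definition poly_of_vec :: "nat \<Rightarrow> (nat \<Rightarrow> 'a::comm_monoid_add) \<Rightarrow> 'a poly" where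
  "poly_of_vec n x = (\<Sum>i<n. monom (x i) i)"

lemma coeff_poly_of_vec: "coeff (poly_of_vec n x) j = (if j < n then x j else 0)"
  by (simp add: poly_of_vec_def coeff_sum coeff_monom)

lemma degree_poly_of_vec_le: "degree (poly_of_vec n x) \<le> n - 1"
  unfolding poly_of_vec_def
  by (rule degree_sum_le) (auto intro: order.trans[OF degree_monom_le])

lemma poly_of_vec_coeff: "degree p < n \<Longrightarrow> poly_of_vec n (coeff p) = p"
  by (rule poly_eqI) (auto simp: coeff_poly_of_vec coeff_eq_0)

lemma degree_poly_of_vec_power_le: "degree (poly_of_vec k x ^ q) \<le> q * (k - 1)"
  using degree_power_le[of "poly_of_vec k x" q] degree_poly_of_vec_le[of k x]
  by (metis mult.commute mult_le_mono1 order_trans)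

lemma sum_hankel_eq_hankel_functional:
  "(\<Sum>is\<in>index_tuples m n. h (sum_list is) * prod_list (map x is))
     = hankel_functional h (poly_of_vec n x ^ m)"
proof (induction m arbitrary: h)
  case 0
  show ?case
    by (simp add: index_tuples_0 hankel_functional_def)
next
  case (Suc m)
  have "(\<Sum>is\<in>index_tuples (Suc m) n. h (sum_list is) * prod_list (map x is))
      = (\<Sum>i<n. x i * (\<Sum>is\<in>index_tuples m n. h (i + sum_list is) * prod_list (map x is)))"
    by (simp add: sum_index_tuples_Suc sum_distrib_left algebra_simps)
  also have "\<dots> = (\<Sum>i<n. x i * hankel_functional (\<lambda>s. h (i + s)) (poly_of_vec n x ^ m))"
    using Suc.IH[of "\<lambda>s. h (_ + s)"] by simp
  also have "\<dots> = hankel_functional h (\<Sum>i<n. smult (x i) (monom 1 i * poly_of_vec n x ^ m))"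
    by (simp add: hankel_functional_sum hankel_functional_smult hankel_functional_monom_mult)
  also have "(\<Sum>i<n. smult (x i) (monom 1 i * poly_of_vec n x ^ m)) = poly_of_vec n x ^ Suc m"
    by (simp add: poly_of_vec_def sum_distrib_right smult_monom_mult)
  finally show ?case .
qed

lemma tensor_form_hankel:
  "tensor_form m n (hankel h) x = hankel_functional h (poly_of_vec n x ^ m)"
  by (simp add: tensor_form_prod_list hankel_def sum_hankel_eq_hankel_functional)

lemma tensor_form_hankel_mult:
  assumes "q * (k - 1) < n"
  shows "tensor_form (q * m) k (hankel h) x
           = tensor_form m n (hankel h) (coeff (poly_of_vec k x ^ q))"
proof -
  have "poly_of_vec n (coeff (poly_of_vec k x ^ q)) = poly_of_vec k x ^ q"
    using degree_poly_of_vec_power_le[of k x q] assms by (intro poly_of_vec_coeff) simp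
  then show ?thesis
    by (simp add: tensor_form_hankel power_mult)
qed

lemma nonzero_vec_coeff_power:
  assumes "q * (k - 1) < n" and "nonzero_vec k x"
  shows "nonzero_vec n (coeff (poly_of_vec k x ^ q))"
proof -
  obtain i where "i < k" "x i \<noteq> 0"
    using assms(2) by (auto simp: nonzero_vec_def)
  then have "poly_of_vec k x ^ q \<noteq> 0"
    by (metis coeff_0 coeff_poly_of_vec power_not_zero)
  then have "coeff (poly_of_vec k x ^ q) (degree (poly_of_vec k x ^ q)) \<noteq> 0"
    by simp
  moreover have "degree (poly_of_vec k x ^ q) < n"
    using degree_poly_of_vec_power_le[of k x q] assms(1) by simp
  ultimately show ?thesis
    unfolding nonzero_vec_def by blast
qed

lemma poly_fun_sum:
  "finite A \<Longrightarrow> (\<And>i. i \<in> A \<Longrightarrow> f i \<in> poly_fun n) \<Longrightarrow> (\<lambda>x. \<Sum>i\<in>A. f i x) \<in> poly_fun n"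
  by (induction A rule: finite_induct) (auto intro: poly_fun.intros)

lemma poly_fun_compose:
  "g \<in> poly_fun n \<Longrightarrow> (\<And>i. i < n \<Longrightarrow> (\<lambda>x. Y x i) \<in> poly_fun k) \<Longrightarrow> (\<lambda>x. g (Y x)) \<in> poly_fun k"
  by (induction g rule: poly_fun.induct) (auto intro: poly_fun.intros)

lemma poly_fun_coeff_poly_of_vec_power: "(\<lambda>x. coeff (poly_of_vec k x ^ q) j) \<in> poly_fun k"
proof (induction q arbitrary: j)
  case 0
  show ?case
    by (simp add: poly_fun.pf_const)
next
  case (Suc q)
  have "(\<lambda>x. coeff (poly_of_vec k x) i) \<in> poly_fun k" for i
    by (cases "i < k") (auto simp: coeff_poly_of_vec intro: poly_fun.intros)
  then have "(\<lambda>x. \<Sum>i\<le>j. coeff (poly_of_vec k x) i * coeff (poly_of_vec k x ^ q) (j - i))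
               \<in> poly_fun k"
    by (intro poly_fun_sum poly_fun.pf_mult Suc) auto
  then show ?case
    by (simp add: coeff_mult)
qed

lemma sos_rep_pullback:
  assumes "sos_rep m n T r"
    and "\<And>i. i < n \<Longrightarrow> (\<lambda>x. Y x i) \<in> poly_fun k"
    and "\<And>x. tensor_form m' k T' x = tensor_form m n T (Y x)"
  shows "sos_rep m' k T' r"
proof -
  obtain p where "\<forall>j<r. p j \<in> poly_fun n" and "\<forall>y. tensor_form m n T y = (\<Sum>j<r. (p j y)\<^sup>2)"
    using assms(1) unfolding sos_rep_def by blast
  with assms(2,3) show ?thesis
    unfolding sos_rep_def
    by (intro exI[of _ "\<lambda>j x. p j (Y x)"]) (auto intro: poly_fun_compose)
qed

lemma sos_pullback:
  assumes "sos_tensor m n T"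
    and "\<And>i. i < n \<Longrightarrow> (\<lambda>x. Y x i) \<in> poly_fun k"
    and "\<And>x. tensor_form m' k T' x = tensor_form m n T (Y x)"
  shows "sos_tensor m' k T' \<and> sos_rank m' k T' \<le> sos_rank m n T"
proof -
  have "sos_rep m n T (sos_rank m n T)"
    using assms(1) unfolding sos_tensor_def sos_rank_def by (rule LeastI_ex)
  then have "sos_rep m' k T' (sos_rank m n T)"
    using assms(2,3) by (rule sos_rep_pullback)
  then show ?thesis
    unfolding sos_tensor_def sos_rank_def by (auto intro: Least_le)
qed

theorem theorem1:
  fixes m q k n :: nat and h :: "nat \<Rightarrow> real"
  assumes "even m" and "m > 0" and "q > 0" and "k > 0"
    and "n = q * (k - 1) + 1"
  shows "(psd_tensor m n (hankel h) \<longrightarrow> psd_tensor (q * m) k (hankel h))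
       \<and> (pd_tensor m n (hankel h) \<longrightarrow> pd_tensor (q * m) k (hankel h))
       \<and> (nsd_tensor m n (hankel h) \<longrightarrow> nsd_tensor (q * m) k (hankel h))
       \<and> (nd_tensor m n (hankel h) \<longrightarrow> nd_tensor (q * m) k (hankel h))
       \<and> (sos_tensor m n (hankel h) \<longrightarrow>
            sos_tensor (q * m) k (hankel h) \<and>
            sos_rank (q * m) k (hankel h) \<le> sos_rank m n (hankel h))"
proof -
  have deg: "q * (k - 1) < n"
    using assms(5) by simp
  note form = tensor_form_hankel_mult[OF deg]
  note nonzero = nonzero_vec_coeff_power[OF deg]
  have "sos_tensor m n (hankel h) \<longrightarrow>
          sos_tensor (q * m) k (hankel h) \<and> sos_rank (q * m) k (hankel h) \<le> sos_rank m n (hankel h)"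
    using sos_pullback[OF _ poly_fun_coeff_poly_of_vec_power form] by blast
  with form nonzero show ?thesis
    unfolding psd_tensor_def pd_tensor_def nsd_tensor_def nd_tensor_def by metis
qed

end
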